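(* Let $U\in U(2^n)$ be an $n$-qubit unitary and $d=2^n$. Run the Twin-$U$ circuit with inputs $\vec i,\vec j\in\{0,1\}^n$. Then the probability of obtaining outputs $\vec k$ on register $\mathcal{A}$ and $\vec\ell$ on register $\mathcal{B}$ is $$P(\vec K=(\vec k,\vec\ell)\mid \vec J=(\vec i,\vec j)) = \frac{1}{d^2}\left|\mathrm{Tr}\!\left[U P^{\vec i,\vec j} U^T P^{\vec k,\vec\ell}\right]\right|^2,$$ where $U^T$ is the transpose in the computational basis.
   Context: Labeling of Paulis: $P^{00}=I$, $P^{01}=X$, $P^{10}=Z$, $P^{11}=Y$ (standard Pauli matrices), and $P^{\vec a,\vec b}=P^{a_1b_1}\otimes\cdots\otimes P^{a_nb_n}$. Twin-$U$ circuit: two registers $\mathcal{A},\mathcal{B}$ of $n$ qubits each are prepared in $|\vec i\rangle_{\mathcal{A}}|\vec j\rangle_{\mathcal{B}}$; apply $H^{\otimes n}$ to $\mathcal{A}$; apply CNOTs from qubit $r$ of $\mathcal{A}$ (control) to qubit $r$ of $\mathcal{B}$ (target), $r=1,\dots,n$; apply $U$ to $\mathcal{A}$ and $U$ to $\mathcal{B}$; apply the same transversal CNOTs again; apply $H^{\otimes n}$ to $\mathcal{A}$; measure both registers in the computational basis, yielding $\vec k$ on $\mathcal{A}$ and $\vec \ell$ on $\mathcal{B}$. *)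

theory Defs
  imports Complex_Main "Jordan_Normal_Form.Matrix"
begin

text \<open>An n-bit string is encoded as a natural number x < 2^n; the
r-th qubit (r = 0,...,n-1) of the string corresponds to bit r of x (bit x r).\<close>

definition adj_mat :: "complex mat \<Rightarrow> complex mat" where
  "adj_mat U = mat (dim_col U) (dim_row U) (\<lambda>(i,j). cnj (U $$ (j,i)))"

definition unitary_mat :: "nat \<Rightarrow> complex mat \<Rightarrow> bool" where
  "unitary_mat d U \<longleftrightarrow> U \<in> carrier_mat d d \<and> U * adj_mat U = 1\<^sub>m d \<and> adj_mat U * U = 1\<^sub>m d"

definition mat_trace :: "complex mat \<Rightarrow> complex" where
  "mat_trace A = (\<Sum>i<dim_row A. A $$ (i,i))"

text \<open>Single-qubit Paulis: P^{00}=I, P^{01}=X, P^{10}=Z, P^{11}=Y; entries indexed by bits.\<close>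
definition pauli1 :: "bool \<Rightarrow> bool \<Rightarrow> bool \<Rightarrow> bool \<Rightarrow> complex" where
  "pauli1 a b x y =
     (if \<not> a \<and> \<not> b then (if x = y then 1 else 0)
      else if \<not> a \<and> b then (if x \<noteq> y then 1 else 0)
      else if a \<and> \<not> b then (if x = y then (if x then -1 else 1) else 0)
      else (if x = y then 0 else if x then \<i> else - \<i>))"

definition pauli :: "nat \<Rightarrow> nat \<Rightarrow> nat \<Rightarrow> complex mat" where
  "pauli n a b = mat (2^n) (2^n)
     (\<lambda>(x,y). \<Prod>r<n. pauli1 (bit a r) (bit b r) (bit x r) (bit y r))"

definition hadamard1 :: "bool \<Rightarrow> bool \<Rightarrow> complex" where
  "hadamard1 x y = (if x \<and> y then -1 else 1) / complex_of_real (sqrt 2)"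

definition hadamard :: "nat \<Rightarrow> complex mat" where
  "hadamard n = mat (2^n) (2^n) (\<lambda>(x,y). \<Prod>r<n. hadamard1 (bit x r) (bit y r))"

text \<open>Kronecker product; register A is the more significant factor: basis index a*dB + b.\<close>
definition kron :: "complex mat \<Rightarrow> complex mat \<Rightarrow> complex mat" where
  "kron A B = mat (dim_row A * dim_row B) (dim_col A * dim_col B)
     (\<lambda>(i,j). A $$ (i div dim_row B, j div dim_col B) * B $$ (i mod dim_row B, j mod dim_col B))"

text \<open>Transversal CNOTs: qubit r of A controls qubit r of B, for all r < n.
  On basis states: |x>_A |y>_B  \<mapsto> |x>_A |y XOR x>_B.\<close>
definition transversal_cnot :: "nat \<Rightarrow> complex mat" where
  "transversal_cnot n = mat (2^n * 2^n) (2^n * 2^n)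
     (\<lambda>(p,q). if p div 2^n = q div 2^n \<and> p mod 2^n = xor (q mod 2^n) (q div 2^n) then 1 else 0)"

definition twinU_circuit :: "nat \<Rightarrow> complex mat \<Rightarrow> complex mat" where
  "twinU_circuit n U =
     kron (hadamard n) (1\<^sub>m (2^n)) * transversal_cnot n * kron U U *
     transversal_cnot n * kron (hadamard n) (1\<^sub>m (2^n))"

definition twinU_prob :: "nat \<Rightarrow> complex mat \<Rightarrow> nat \<Rightarrow> nat \<Rightarrow> nat \<Rightarrow> nat \<Rightarrow> real" where
  "twinU_prob n U i j k l =
     (cmod ((twinU_circuit n U *\<^sub>v unit_vec (2^n * 2^n) (i * 2^n + j)) $ (k * 2^n + l)))\<^sup>2"

end

theory Submission
  imports Defs
begin

(* Write s_a(x) = (-1)^(a.x), so that H^n has entries s_x(y) / sqrt(2^n). The first Hadamard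
   layer and the CNOTs send |i,j> to 2^(-n/2) sum_x s_i(x) |x, x xor j>; applying U (x) U and
   undoing the CNOTs and Hadamards, the amplitude of |k,l> is
     2^(-n) sum_{x,y} s_k(y) s_i(x) U(y,x) U(y xor l, x xor j).
   On the other side, P^{a,b} is a signed permutation matrix whose only nonzero entries are
   w_{a,b} s_a(x) at (x, x xor b), with |w_{a,b}| = 1; expanding the trace of
   U P^{i,j} U^T P^{k,l} gives the same double sum up to a unimodular factor. *)

lemma xor_less_power_nat: "(a::nat) < 2^n \<Longrightarrow> b < 2^n \<Longrightarrow> xor a b < 2^n"
  by (metis take_bit_nat_eq_self_iff take_bit_xor)

lemma eq_xor_iff_eq_xor: "(y::nat) = xor x b \<longleftrightarrow> x = xor y b"
  by (auto simp: xor.assoc)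

lemma nat_eq_iff_bits_below:
  "(x::nat) < 2^n \<Longrightarrow> y < 2^n \<Longrightarrow> x = y \<longleftrightarrow> (\<forall>r<n. bit x r = bit y r)"
  by (metis bit_eq_iff bit_take_bit_iff take_bit_nat_eq_self)

lemma sum_xor_reindex:
  assumes "b < 2^n"
  shows "(\<Sum>x<2^n. f (xor x b)) = (\<Sum>x<(2::nat)^n. f x)"
  by (rule sum.reindex_bij_witness[of _ "\<lambda>x. xor x b" "\<lambda>x. xor x b"])
    (use assms in \<open>auto simp: xor_less_power_nat xor.assoc\<close>)

lemma mult_add_less_mult: "a < m \<Longrightarrow> b < d \<Longrightarrow> a*d + b < m*(d::nat)"
proof -
  assume "a < m" "b < d"
  then have "a*d + b < (a + 1)*d" by simp
  also have "\<dots> \<le> m*d" using \<open>a < m\<close> by (intro mult_right_mono) auto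
  finally show ?thesis .
qed

lemma mult_add_eq_mult_add_iff:
  assumes "b < d" "b' < d"
  shows "a*d + b = a'*d + b' \<longleftrightarrow> a = a' \<and> (b::nat) = b'"
proof -
  have "(a*d + b) div d = a" "(a'*d + b') div d = a'" "(a*d + b) mod d = b" "(a'*d + b') mod d = b'"
    using assms by simp_all
  then show ?thesis by metis
qed

lemma sum_lessThan_mult:
  "(\<Sum>q<m*d. f q) = (\<Sum>a<m. \<Sum>b<d. f (a*d + b::nat))"
proof -
  have "(\<Sum>a<m. \<Sum>b<d. f (a*d + b)) = (\<Sum>(a,b)\<in>{..<m}\<times>{..<d}. f (a*d + b))"
    by (simp add: sum.cartesian_product)
  also have "\<dots> = (\<Sum>q<m*d. f q)"
    by (rule sum.reindex_bij_witness[of _ "\<lambda>q. (q div d, q mod d)" "\<lambda>(a,b). a*d + b"])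
      (auto simp: less_mult_imp_div_less mult_add_less_mult,
        metis mod_less_divisor mult_0_right not_less_zero neq0_conv)
  finally show ?thesis ..
qed

lemma prod_if_zero:
  "finite A \<Longrightarrow> (\<Prod>r\<in>A. if P r then c r else 0) =
     (if \<forall>r\<in>A. P r then \<Prod>r\<in>A. c r else (0::'a::comm_semiring_1))"
  by (force intro: prod_zero)

definition dot_sign :: "nat \<Rightarrow> nat \<Rightarrow> nat \<Rightarrow> complex" where
  "dot_sign n a x = (\<Prod>r<n. if bit a r \<and> bit x r then -1 else 1)"

lemma dot_sign_commute: "dot_sign n a x = dot_sign n x a"
  unfolding dot_sign_def by (simp add: conj_commute)

lemma dot_sign_xor: "dot_sign n a (xor x y) = dot_sign n a x * dot_sign n a y"
  unfolding dot_sign_def bit_xor_iff prod.distrib[symmetric] by (intro prod.cong) auto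

lemma norm_dot_sign: "cmod (dot_sign n a x) = 1"
  unfolding dot_sign_def prod_norm[symmetric] by (intro prod.neutral) auto

lemma hadamard_carrier: "hadamard n \<in> carrier_mat (2^n) (2^n)"
  by (simp add: hadamard_def)

lemma hadamard_entry:
  "x < 2^n \<Longrightarrow> y < 2^n \<Longrightarrow> hadamard n $$ (x,y) = dot_sign n x y / complex_of_real (sqrt 2) ^ n"
  unfolding hadamard_def hadamard1_def dot_sign_def by (simp add: prod_dividef)

lemma sqrt2_power_square: "complex_of_real (sqrt 2) ^ n * complex_of_real (sqrt 2) ^ n = 2^n"
  by (simp flip: power_mult_distrib of_real_mult)

(* Y = -i Z X, so P^{a,b} is this phase times Z^a X^b. *)
definition pauli_phase :: "nat \<Rightarrow> nat \<Rightarrow> nat \<Rightarrow> complex" where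
  "pauli_phase n a b = (\<Prod>r<n. if bit a r \<and> bit b r then -\<i> else 1)"

lemma norm_pauli_phase: "cmod (pauli_phase n a b) = 1"
  unfolding pauli_phase_def prod_norm[symmetric] by (intro prod.neutral) auto

lemma pauli_carrier: "pauli n a b \<in> carrier_mat (2^n) (2^n)"
  by (simp add: pauli_def)

lemma pauli1_eq:
  "pauli1 a b x y =
    (if y = (x \<noteq> b) then (if a \<and> b then -\<i> else 1) * (if a \<and> x then -1 else 1) else 0)"
  by (cases a; cases b; cases x; cases y) (simp_all add: pauli1_def)

lemma pauli_entry:
  assumes "x < 2^n" "y < 2^n" "b < 2^n"
  shows "pauli n a b $$ (x,y) = (if y = xor x b then pauli_phase n a b * dot_sign n a x else 0)"
proof -
  have "pauli n a b $$ (x,y) = (\<Prod>r<n. if bit y r = bit (xor x b) r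
      then (if bit a r \<and> bit b r then -\<i> else 1) * (if bit a r \<and> bit x r then -1 else 1) else 0)"
    using assms unfolding pauli_def pauli1_eq bit_xor_iff by simp
  also have "\<dots> = (if y = xor x b then pauli_phase n a b * dot_sign n a x else 0)"
    unfolding prod_if_zero[OF finite_lessThan] pauli_phase_def dot_sign_def prod.distrib
    using nat_eq_iff_bits_below[OF assms(2) xor_less_power_nat[OF assms(1,3)]] by (simp add: Ball_def)
  finally show ?thesis .
qed

lemma mult_pauli_entry:
  assumes "A \<in> carrier_mat m (2^n)" "y < m" "s < 2^n" "b < 2^n"
  shows "(A * pauli n a b) $$ (y,s) = A $$ (y, xor s b) * pauli_phase n a b * dot_sign n a (xor s b)"
proof -
  have "(A * pauli n a b) $$ (y,s) = (\<Sum>x<2^n. A $$ (y,x) * pauli n a b $$ (x,s))"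
    using assms by (simp add: pauli_def scalar_prod_def lessThan_atLeast0)
  also have "\<dots> =
      (\<Sum>x<2^n. if x = xor s b then A $$ (y,x) * pauli_phase n a b * dot_sign n a x else 0)"
    using assms by (intro sum.cong) (auto simp: pauli_entry xor.assoc)
  also have "\<dots> = A $$ (y, xor s b) * pauli_phase n a b * dot_sign n a (xor s b)"
    using assms by (simp add: xor_less_power_nat)
  finally show ?thesis .
qed

definition twin_sum :: "nat \<Rightarrow> complex mat \<Rightarrow> nat \<Rightarrow> nat \<Rightarrow> nat \<Rightarrow> nat \<Rightarrow> complex" where
  "twin_sum n U i j k l = (\<Sum>y<2^n. \<Sum>x<2^n.
     dot_sign n k y * dot_sign n i x * U $$ (y,x) * U $$ (xor y l, xor x j))"

lemma mat_trace_pauli_transpose_pauli: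
  assumes U: "U \<in> carrier_mat (2^n) (2^n)" and "j < 2^n" "l < 2^n"
  shows "mat_trace (U * pauli n i j * transpose_mat U * pauli n k l) =
    pauli_phase n i j * pauli_phase n k l * dot_sign n k l * twin_sum n U i j k l"
proof -
  define M where "M = U * pauli n i j * transpose_mat U"
  have M: "M \<in> carrier_mat (2^n) (2^n)"
    using U pauli_carrier unfolding M_def by (intro mult_carrier_mat) simp_all
  have M_entry: "M $$ (y,t) =
      pauli_phase n i j * (\<Sum>x<2^n. dot_sign n i x * U $$ (y,x) * U $$ (t, xor x j))"
    if "y < 2^n" "t < 2^n" for y t
  proof -
    have "M $$ (y,t) = (\<Sum>s<2^n. (U * pauli n i j) $$ (y,s) * U $$ (t,s))"
      using that U by (simp add: M_def pauli_def scalar_prod_def lessThan_atLeast0)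
    also have "\<dots> = (\<Sum>s<2^n.
        (\<lambda>x. U $$ (y,x) * pauli_phase n i j * dot_sign n i x * U $$ (t, xor x j)) (xor s j))"
      using that U assms(2) by (intro sum.cong) (simp_all add: mult_pauli_entry xor.assoc)
    also have "\<dots> = (\<Sum>x<2^n. U $$ (y,x) * pauli_phase n i j * dot_sign n i x * U $$ (t, xor x j))"
      by (rule sum_xor_reindex[OF assms(2)])
    finally show ?thesis
      by (simp add: sum_distrib_left mult_ac)
  qed
  have "mat_trace (M * pauli n k l) = (\<Sum>y<2^n. (M * pauli n k l) $$ (y,y))"
    using M by (simp add: mat_trace_def)
  also have "\<dots> = (\<Sum>y<2^n. M $$ (y, xor y l) * pauli_phase n k l * dot_sign n k (xor y l))"
    using M assms(3) by (intro sum.cong) (simp_all add: mult_pauli_entry)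
  also have "\<dots> = pauli_phase n i j * pauli_phase n k l * dot_sign n k l * twin_sum n U i j k l"
    using assms(3) by (simp add: M_entry xor_less_power_nat dot_sign_xor twin_sum_def
        sum_distrib_left sum_distrib_right mult_ac)
  finally show ?thesis
    by (simp add: M_def)
qed

lemma kron_carrier:
  "A \<in> carrier_mat m m' \<Longrightarrow> B \<in> carrier_mat d d' \<Longrightarrow> kron A B \<in> carrier_mat (m*d) (m'*d')"
  by (simp add: kron_def)

lemma kron_mult_vec_nth:
  assumes "A \<in> carrier_mat m m'" "B \<in> carrier_mat d d'" "w \<in> carrier_vec (m'*d')" "a < m" "b < d"
  shows "(kron A B *\<^sub>v w) $ (a*d + b) =
    (\<Sum>a'<m'. \<Sum>b'<d'. A $$ (a,a') * B $$ (b,b') * w $ (a'*d' + b'))"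
proof -
  have "(kron A B *\<^sub>v w) $ (a*d + b) = (\<Sum>q<m'*d'. kron A B $$ (a*d + b, q) * w $ q)"
    using assms mult_add_less_mult by (simp add: kron_def scalar_prod_def lessThan_atLeast0)
  also have "\<dots> = (\<Sum>a'<m'. \<Sum>b'<d'. kron A B $$ (a*d + b, a'*d' + b') * w $ (a'*d' + b'))"
    by (rule sum_lessThan_mult)
  also have "\<dots> = (\<Sum>a'<m'. \<Sum>b'<d'. A $$ (a,a') * B $$ (b,b') * w $ (a'*d' + b'))"
    using assms by (intro sum.cong refl) (simp add: kron_def mult_add_less_mult)
  finally show ?thesis .
qed

lemma kron_one_mult_vec_nth:
  assumes "A \<in> carrier_mat m m'" "w \<in> carrier_vec (m'*d)" "a < m" "b < d"
  shows "(kron A (1\<^sub>m d) *\<^sub>v w) $ (a*d + b) = (\<Sum>a'<m'. A $$ (a,a') * w $ (a'*d + b))"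
proof -
  have "(kron A (1\<^sub>m d) *\<^sub>v w) $ (a*d + b) =
      (\<Sum>a'<m'. \<Sum>b'<d. A $$ (a,a') * 1\<^sub>m d $$ (b,b') * w $ (a'*d + b'))"
    by (rule kron_mult_vec_nth[OF assms(1) one_carrier_mat assms(2-4)])
  also have "\<dots> = (\<Sum>a'<m'. \<Sum>b'<d. if b' = b then A $$ (a,a') * w $ (a'*d + b) else 0)"
    using assms(4) by (intro sum.cong refl) auto
  also have "\<dots> = (\<Sum>a'<m'. A $$ (a,a') * w $ (a'*d + b))"
    using assms by simp
  finally show ?thesis .
qed

lemma transversal_cnot_carrier: "transversal_cnot n \<in> carrier_mat (2^n*2^n) (2^n*2^n)"
  by (simp add: transversal_cnot_def)

lemma transversal_cnot_mult_vec_nth: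
  assumes "w \<in> carrier_vec (2^n*2^n)" "a < 2^n" "b < 2^n"
  shows "(transversal_cnot n *\<^sub>v w) $ (a*2^n + b) = w $ (a*2^n + xor b a)"
proof -
  have "(transversal_cnot n *\<^sub>v w) $ (a*2^n + b) =
      (\<Sum>q<2^n*2^n. transversal_cnot n $$ (a*2^n + b, q) * w $ q)"
    using assms mult_add_less_mult by (simp add: transversal_cnot_def scalar_prod_def lessThan_atLeast0)
  also have "\<dots> = (\<Sum>a'<2^n. \<Sum>b'<2^n.
      transversal_cnot n $$ (a*2^n + b, a'*2^n + b') * w $ (a'*2^n + b'))"
    by (rule sum_lessThan_mult)
  also have "\<dots> = (\<Sum>a'<2^n. \<Sum>b'<2^n.
      if b' = xor b a then if a' = a then w $ (a*2^n + xor b a) else 0 else 0)"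
    using assms by (intro sum.cong refl)
      (auto simp: transversal_cnot_def mult_add_less_mult eq_xor_iff_eq_xor[of b])
  also have "\<dots> = w $ (a*2^n + xor b a)"
    using assms by (simp add: xor_less_power_nat)
  finally show ?thesis .
qed

lemma twinU_circuit_mult_vec:
  assumes "U \<in> carrier_mat (2^n) (2^n)" "v \<in> carrier_vec (2^n*2^n)"
  defines "H \<equiv> kron (hadamard n) (1\<^sub>m (2^n))" and "C \<equiv> transversal_cnot n"
  shows "twinU_circuit n U *\<^sub>v v = H *\<^sub>v (C *\<^sub>v (kron U U *\<^sub>v (C *\<^sub>v (H *\<^sub>v v))))"
proof -
  have "H \<in> carrier_mat (2^n*2^n) (2^n*2^n)" "C \<in> carrier_mat (2^n*2^n) (2^n*2^n)"
    "kron U U \<in> carrier_mat (2^n*2^n) (2^n*2^n)"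
    unfolding H_def C_def using assms(1) hadamard_carrier transversal_cnot_carrier
    by (auto intro: kron_carrier)
  moreover have "twinU_circuit n U = H * C * kron U U * C * H"
    by (simp add: twinU_circuit_def H_def C_def)
  ultimately show ?thesis
    using assms(2)
    by (simp add: mult_carrier_mat[where n = "2^n*2^n"] mult_mat_vec_carrier[where n = "2^n*2^n"]
        assoc_mult_mat_vec[where n\<^sub>1 = "2^n*2^n" and n\<^sub>2 = "2^n*2^n" and n\<^sub>3 = "2^n*2^n"])
qed

lemma hadamard_cnot_state_nth:
  assumes "i < 2^n" "j < 2^n" "a < 2^n" "b < 2^n"
  defines "e \<equiv> unit_vec (2^n*2^n) (i*2^n + j)"
  shows "(transversal_cnot n *\<^sub>v (kron (hadamard n) (1\<^sub>m (2^n)) *\<^sub>v e)) $ (a*2^n + b) =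
    hadamard n $$ (a,i) * (if b = xor a j then 1 else 0)"
proof -
  have e: "e \<in> carrier_vec (2^n*2^n)"
    by (simp add: e_def)
  have H: "kron (hadamard n) (1\<^sub>m (2^n)) \<in> carrier_mat (2^n*2^n) (2^n*2^n)"
    by (rule kron_carrier[OF hadamard_carrier one_carrier_mat])
  have "(transversal_cnot n *\<^sub>v (kron (hadamard n) (1\<^sub>m (2^n)) *\<^sub>v e)) $ (a*2^n + b) =
      (kron (hadamard n) (1\<^sub>m (2^n)) *\<^sub>v e) $ (a*2^n + xor b a)"
    by (rule transversal_cnot_mult_vec_nth[OF mult_mat_vec_carrier[OF H e] assms(3,4)])
  also have "\<dots> = (\<Sum>a'<2^n. hadamard n $$ (a,a') * e $ (a'*2^n + xor b a))"
    by (rule kron_one_mult_vec_nth[OF hadamard_carrier e assms(3) xor_less_power_nat[OF assms(4,3)]])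
  also have "\<dots> =
      (\<Sum>a'<2^n. if a' = i then hadamard n $$ (a,i) * (if xor b a = j then 1 else 0) else 0)"
    using assms by (intro sum.cong refl)
      (auto simp: mult_add_less_mult mult_add_eq_mult_add_iff xor_less_power_nat)
  also have "\<dots> = hadamard n $$ (a,i) * (if xor b a = j then 1 else 0)"
    using assms by simp
  also have "xor b a = j \<longleftrightarrow> b = xor a j"
    by (metis eq_xor_iff_eq_xor xor.commute)
  finally show ?thesis .
qed

lemma twinU_amplitude:
  assumes U: "U \<in> carrier_mat (2^n) (2^n)" and "i < 2^n" "j < 2^n" "k < 2^n" "l < 2^n"
  shows "(twinU_circuit n U *\<^sub>v unit_vec (2^n*2^n) (i*2^n + j)) $ (k*2^n + l) =
    twin_sum n U i j k l / 2^n"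
proof -
  define H where "H = kron (hadamard n) (1\<^sub>m (2^n))"
  define C where "C = transversal_cnot n"
  define w where "w = C *\<^sub>v (H *\<^sub>v unit_vec (2^n*2^n) (i*2^n + j))"
  have UU: "kron U U \<in> carrier_mat (2^n*2^n) (2^n*2^n)"
    by (rule kron_carrier[OF U U])
  have H: "H \<in> carrier_mat (2^n*2^n) (2^n*2^n)"
    unfolding H_def by (rule kron_carrier[OF hadamard_carrier one_carrier_mat])
  have w: "w \<in> carrier_vec (2^n*2^n)"
    unfolding w_def C_def
    by (rule mult_mat_vec_carrier[OF transversal_cnot_carrier mult_mat_vec_carrier[OF H unit_vec_carrier]])
  have UUw_carrier: "kron U U *\<^sub>v w \<in> carrier_vec (2^n*2^n)"
    by (rule mult_mat_vec_carrier[OF UU w])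
  have UUw: "(kron U U *\<^sub>v w) $ (a*2^n + b) =
      (\<Sum>x<2^n. U $$ (a,x) * U $$ (b, xor x j) * hadamard n $$ (x,i))"
    if "a < 2^n" "b < 2^n" for a b
  proof -
    have "(kron U U *\<^sub>v w) $ (a*2^n + b) =
        (\<Sum>x<2^n. \<Sum>c<2^n. U $$ (a,x) * U $$ (b,c) * w $ (x*2^n + c))"
      by (rule kron_mult_vec_nth[OF U U w that])
    also have "\<dots> = (\<Sum>x<2^n. \<Sum>c<2^n.
        if c = xor x j then U $$ (a,x) * U $$ (b, xor x j) * hadamard n $$ (x,i) else 0)"
      using assms(2,3) by (intro sum.cong refl) (simp add: w_def H_def C_def hadamard_cnot_state_nth)
    also have "\<dots> = (\<Sum>x<2^n. U $$ (a,x) * U $$ (b, xor x j) * hadamard n $$ (x,i))"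
      using assms(3) by (intro sum.cong refl) (simp add: xor_less_power_nat)
    finally show ?thesis .
  qed
  have "(twinU_circuit n U *\<^sub>v unit_vec (2^n*2^n) (i*2^n + j)) $ (k*2^n + l) =
      (H *\<^sub>v (C *\<^sub>v (kron U U *\<^sub>v w))) $ (k*2^n + l)"
    using U by (simp add: twinU_circuit_mult_vec w_def H_def C_def)
  also have "\<dots> = (\<Sum>y<2^n. hadamard n $$ (k,y) * (C *\<^sub>v (kron U U *\<^sub>v w)) $ (y*2^n + l))"
    unfolding H_def C_def
    by (rule kron_one_mult_vec_nth[OF hadamard_carrier
          mult_mat_vec_carrier[OF transversal_cnot_carrier UUw_carrier] assms(4,5)])
  also have "\<dots> = (\<Sum>y<2^n. hadamard n $$ (k,y) * (kron U U *\<^sub>v w) $ (y*2^n + xor l y))"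
    using assms(5) by (intro sum.cong refl) (simp add: C_def transversal_cnot_mult_vec_nth[OF UUw_carrier])
  also have "\<dots> = (\<Sum>y<2^n. \<Sum>x<2^n.
      hadamard n $$ (k,y) * hadamard n $$ (x,i) * U $$ (y,x) * U $$ (xor y l, xor x j))"
    using assms by (intro sum.cong refl)
      (simp add: UUw xor_less_power_nat sum_distrib_left xor.commute mult_ac)
  also have "\<dots> = twin_sum n U i j k l / 2^n"
    using assms sqrt2_power_square
    by (simp add: twin_sum_def hadamard_entry dot_sign_commute[of n _ i] sum_divide_distrib)
  finally show ?thesis .
qed

theorem lemma4:
  fixes n i j k l :: nat and U :: "complex mat"
  assumes "unitary_mat (2^n) U"
    and "i < 2^n" and "j < 2^n" and "k < 2^n" and "l < 2^n"
  shows "twinU_prob n U i j k l =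
    1 / (real (2^n))\<^sup>2 * (cmod (mat_trace (U * pauli n i j * transpose_mat U * pauli n k l)))\<^sup>2"
proof -
  have U: "U \<in> carrier_mat (2^n) (2^n)"
    using assms(1) by (simp add: unitary_mat_def)
  have "twinU_prob n U i j k l = (cmod (twin_sum n U i j k l / 2^n))\<^sup>2"
    using assms(2-5) by (simp add: twinU_prob_def twinU_amplitude[OF U])
  also have "\<dots> = 1 / (real (2^n))\<^sup>2 * (cmod (twin_sum n U i j k l))\<^sup>2"
    by (simp add: norm_divide norm_power power_divide)
  also have "cmod (twin_sum n U i j k l) =
      cmod (mat_trace (U * pauli n i j * transpose_mat U * pauli n k l))"
    using assms(3,5)
    by (simp add: mat_trace_pauli_transpose_pauli[OF U] norm_mult norm_pauli_phase norm_dot_sign)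
  finally show ?thesis .
qed

end
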